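(* For every $k\in\mathbb N$, the $k$-th standard Fibonacci-like partition of the first kind $\mathfrak P_k$ is a partition of $\mathbb N$ into exactly $F(k)$ parts. Explicitly: $\mathfrak P_1=\mathfrak P_2=\{\mathbb N\}$, and for $k\geq 3$, with $i=k-3$, the $F(k)$ sets $$R_{i,0},R_{i,1},\ldots,R_{i,F(i+2)-1},\ R_{i+1,0},R_{i+1,1},\ldots,R_{i+1,F(i+1)-1}$$ are pairwise disjoint and their union is $\mathbb N$.
   Context: $\mathbb N=\{1,2,\dots\}$. $\varphi=\frac{1+\sqrt5}{2}$; $a(n)=\lfloor n\varphi\rfloor$ for $n\in\mathbb N$. $F$ is the Fibonacci sequence with $F(0)=0$, $F(1)=F(2)=1$, $F(n)=F(n-1)+F(n-2)$. For $i\in\mathbb Z^{\geq 0}$, $j\in\mathbb Z$: $f_{i,j}(n)=F(i+1)a(n)+F(i)n-j$ ($n\in\mathbb N$) and $R_{i,j}=\{f_{i,j}(n)\mid n\in\mathbb N\}$. The $k$-th standard Fibonacci-like partition of the first kind is $\mathfrak P_1=\mathfrak P_2=\{\mathbb N\}$ and, for $k\ge 3$, $\mathfrak P_k=\{R_{i,0},\ldots,R_{i,F(i+2)-1},R_{i+1,0},\ldots,R_{i+1,F(i+1)-1}\}$ with $i=k-3$. *)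

theory Defs
  imports Complex_Main "HOL-Number_Theory.Fib"
begin

definition Npos :: "int set" where "Npos = {n. n \<ge> 1}"

definition phi :: real where "phi = (1 + sqrt 5) / 2"

definition a :: "int \<Rightarrow> int" where "a n = \<lfloor>real_of_int n * phi\<rfloor>"

definition f :: "nat \<Rightarrow> int \<Rightarrow> int \<Rightarrow> int" where
  "f i j n = int (fib (i+1)) * a n + int (fib i) * n - j"

definition R :: "nat \<Rightarrow> int \<Rightarrow> int set" where
  "R i j = f i j ` Npos"

definition Idx :: "nat \<Rightarrow> (nat \<times> int) set" where
  "Idx k = (let i = k - 3 in
     {(i, j) | j. 0 \<le> j \<and> j \<le> int (fib (i+2)) - 1} \<union>
     {(i+1, j) | j. 0 \<le> j \<and> j \<le> int (fib (i+1)) - 1})"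

definition PP :: "nat \<Rightarrow> int set set" where
  "PP k = (if k \<le> 2 then {Npos} else (\<lambda>(i,j). R i j) ` Idx k)"

end

theory Submission
  imports Defs "HOL-Library.Disjoint_Sets"
begin

(* Since 1/phi + 1/phi^2 = 1, the sequences a(n) = floor(n phi) and a(n) + n = floor(n phi^2)
   are complementary Beatty sequences: every positive integer is a value of exactly one of them.
   Combined with the identities a(a(n)) = a(n) + n - 1 and a(a(n) + n) = 2 a(n) + n, this shows
   f_{i,j} o a = f_{i+1,j+F(i+1)} and f_{i,j} o (a + id) = f_{i+2,j}, so R_{i,j} is the disjoint
   union of R_{i+1,j+F(i+1)} and R_{i+2,j}. Splitting every R_{i,j} of P_k in this way and keeping
   the sets R_{i+1,j} unchanged yields exactly P_{k+1}; starting from the Beatty partition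
   {R_{0,0}, R_{1,0}} of N, induction shows that every P_k is a partition, with F(k) distinct
   parts because they are nonempty and pairwise disjoint. *)

lemma phi_squared: "phi\<^sup>2 = phi + 1"
  unfolding phi_def by (simp add: power2_eq_square field_simps)

lemma one_less_phi: "1 < phi" and phi_less_two: "phi < 2"
proof -
  have "sqrt 5 < (3::real)" by (rule real_less_lsqrt) auto
  then show "1 < phi" "phi < 2" unfolding phi_def by auto
qed

lemma phi_irrational: "phi \<notin> \<rat>"
proof
  assume "phi \<in> \<rat>"
  then obtain p q :: nat where "q \<noteq> 0" and phi_eq: "\<bar>phi\<bar> = p / q" and "coprime p q"
    by (rule Rats_abs_nat_div_natE)
  have p_eq: "real p = phi * q" using phi_eq one_less_phi \<open>q \<noteq> 0\<close> by (simp add: field_simps)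
  have "real (p\<^sup>2) = phi\<^sup>2 * q\<^sup>2" by (simp add: p_eq power_mult_distrib)
  also have "\<dots> = (phi + 1) * q\<^sup>2" by (simp add: phi_squared)
  also have "\<dots> = real (q * (p + q))" unfolding of_nat_mult of_nat_add of_nat_power p_eq by algebra
  finally have "p\<^sup>2 = q * (p + q)" by (simp only: of_nat_eq_iff)
  then have "q dvd p\<^sup>2" by simp
  moreover have "coprime (p\<^sup>2) q" using \<open>coprime p q\<close> by simp
  ultimately have "is_unit q" using coprime_absorb_right by blast
  then have "q = 1" by simp
  then have "phi = p" using phi_eq one_less_phi by simp
  then have "1 < p" "p < 2" using one_less_phi phi_less_two by simp_all
  then show False by simp
qed

lemma of_int_mult_phi_neq_of_int:
  assumes "n \<noteq> 0" shows "of_int n * phi \<noteq> of_int m"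
proof
  assume "of_int n * phi = of_int m"
  then have "phi = of_int m / of_int n" using assms by (simp add: field_simps)
  then show False using phi_irrational by (metis Rats_divide Rats_of_int)
qed

lemma frac_mult_phi_pos: "n \<noteq> 0 \<Longrightarrow> 0 < frac (of_int n * phi)"
  using of_int_mult_phi_neq_of_int frac_ge_0[of "of_int n * phi"]
  by (fastforce simp: order_le_less elim: Ints_cases)

lemma divide_phi_add_divide_phi_squared: "x / phi + x / phi\<^sup>2 = x"
proof -
  have "x / phi + x / phi\<^sup>2 = x * (phi + 1) / phi\<^sup>2"
    using one_less_phi by (simp add: field_simps power2_eq_square)
  then show ?thesis using one_less_phi by (simp add: phi_squared)
qed

lemma a_eq_iff: "a n = k \<longleftrightarrow> of_int k / phi \<le> of_int n \<and> of_int n < of_int (k + 1) / phi"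
  unfolding a_def floor_eq_iff using one_less_phi by (simp add: field_simps)

lemma a_add_self_eq_iff:
  "a n + n = k \<longleftrightarrow> of_int k / phi\<^sup>2 \<le> of_int n \<and> of_int n < of_int (k + 1) / phi\<^sup>2"
proof -
  have eq: "a n + n = \<lfloor>of_int n * phi\<^sup>2\<rfloor>"
    unfolding a_def phi_squared by (simp add: algebra_simps)
  have "0 < phi\<^sup>2" using one_less_phi by simp
  then show ?thesis unfolding eq floor_eq_iff by (simp add: field_simps)
qed

lemma a_pos: assumes "n \<ge> 1" shows "a n \<ge> 1"
proof -
  have "1 * 1 \<le> of_int n * phi" using assms one_less_phi by (intro mult_mono) auto
  then show ?thesis unfolding a_def by (simp add: le_floor_iff)
qed

lemma strict_mono_a: "strict_mono a"
proof (rule strict_monoI)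
  fix n m :: int assume "n < m"
  then have "(of_int n + 1) * phi \<le> of_int m * phi"
    using one_less_phi by (intro mult_right_mono) simp_all
  then have "of_int n * phi + 1 \<le> of_int m * phi"
    using one_less_phi by (simp add: distrib_right)
  then show "a n < a m" unfolding a_def by linarith
qed

lemma Beatty_Int_eq_empty: "a ` Npos \<inter> (\<lambda>n. a n + n) ` Npos = {}"
proof -
  have False if "n \<ge> 1" and "a n = a m + m" for n m
  proof -
    \<comment> \<open>k <= n + m < k + 1 forces n and m to be the left endpoints k/phi and k/phi^2
      of their preimage intervals, but n phi is never an integer.\<close>
    define k where "k = a n"
    have "a n = k" "a m + m = k" using k_def that(2) by simp_all
    then have bounds: "of_int k / phi \<le> of_int n" "of_int n < of_int (k + 1) / phi"
      "of_int k / phi\<^sup>2 \<le> of_int m" "of_int m < of_int (k + 1) / phi\<^sup>2"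
      unfolding a_eq_iff a_add_self_eq_iff by auto
    then have "k = n + m"
      using divide_phi_add_divide_phi_squared[of "of_int k"]
        divide_phi_add_divide_phi_squared[of "of_int (k + 1)"] by simp
    then have "of_int k / phi = of_int n"
      using bounds(1,3) divide_phi_add_divide_phi_squared[of "of_int k"] by simp
    then have "of_int n * phi = of_int k" using one_less_phi by (simp add: field_simps)
    then show False using of_int_mult_phi_neq_of_int \<open>n \<ge> 1\<close> by simp
  qed
  then show ?thesis unfolding Npos_def by force
qed

lemma Beatty_Un_eq_Npos: "a ` Npos \<union> (\<lambda>n. a n + n) ` Npos = Npos"
proof (intro equalityI subsetI)
  fix k assume "k \<in> a ` Npos \<union> (\<lambda>n. a n + n) ` Npos"
  then show "k \<in> Npos" unfolding Npos_def using a_pos by force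
next
  fix k assume "k \<in> Npos"
  then have "k \<ge> 1" by (simp add: Npos_def)
  \<comment> \<open>N lies in the unit interval (x - 1/phi^2, x + 1/phi) but differs from x: to the right
    of x it is a preimage of k under a, to the left k - N is one under n |-> a n + n.\<close>
  define x where "x = of_int k / phi"
  define N where "N = \<lfloor>of_int (k + 1) / phi\<rfloor>"
  have shift: "of_int (k + 1) / phi = x + 1 / phi"
    by (simp add: x_def add_divide_distrib)
  have N_neq: "of_int N \<noteq> of_int j / phi" if "j \<noteq> 0" for j
  proof
    assume "of_int N = of_int j / phi"
    then have "of_int N * phi = of_int j" using one_less_phi by (simp add: field_simps)
    then show False using of_int_mult_phi_neq_of_int[of N j] that by (cases "N = 0") auto
  qed
  have N_bounds: "x + 1 / phi - 1 < of_int N" "of_int N < x + 1 / phi"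
    using N_neq[of "k + 1"] \<open>k \<ge> 1\<close> of_int_floor_le[of "of_int (k + 1) / phi"]
    unfolding N_def shift by linarith+
  have x_pos: "0 < x" "x < of_int k" using \<open>k \<ge> 1\<close> one_less_phi
    unfolding x_def by (simp_all add: divide_less_eq)
  consider "x < of_int N" | "of_int N < x" using N_neq[of k] \<open>k \<ge> 1\<close> unfolding x_def by linarith
  then show "k \<in> a ` Npos \<union> (\<lambda>n. a n + n) ` Npos"
  proof cases
    case 1
    have "a N = k" unfolding a_eq_iff shift using 1 N_bounds by (simp add: x_def)
    moreover have "N \<ge> 1" using 1 x_pos by simp
    ultimately show ?thesis unfolding Npos_def by force
  next
    case 2
    have "of_int k / phi\<^sup>2 = of_int k - x"
      using divide_phi_add_divide_phi_squared[of "of_int k"] by (simp add: x_def)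
    moreover have "of_int (k + 1) / phi\<^sup>2 = of_int (k + 1) - of_int (k + 1) / phi"
      using divide_phi_add_divide_phi_squared[of "of_int (k + 1)"] by linarith
    ultimately have "a (k - N) + (k - N) = k"
      unfolding a_add_self_eq_iff shift using 2 N_bounds by simp
    moreover have "k - N \<ge> 1" using 2 x_pos by simp
    ultimately show ?thesis unfolding Npos_def by force
  qed
qed

lemma a_of_a: assumes "n \<ge> 1" shows "a (a n) = a n + n - 1"
proof -
  define t where "t = frac (of_int n * phi)"
  have t: "0 < t" "t < 1" using frac_mult_phi_pos frac_lt_1 assms unfolding t_def by auto
  have "of_int (a n) = of_int n * phi - t" unfolding t_def a_def frac_def by simp
  then have "of_int (a n) * phi = of_int (a n + n - 1) + (1 - t * (phi - 1))"
    using phi_squared unfolding of_int_diff of_int_add of_int_1 by algebra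
  moreover have "0 < t * (phi - 1)" using t one_less_phi by simp
  moreover have "t * (phi - 1) < 1"
    using mult_strict_mono[of t 1 "phi - 1" 1] t one_less_phi phi_less_two by simp
  ultimately show ?thesis unfolding a_def[of "a n"] floor_eq_iff by simp
qed

lemma a_of_a_add_self: assumes "n \<ge> 1" shows "a (a n + n) = 2 * a n + n"
proof -
  define t where "t = frac (of_int n * phi)"
  have t: "0 < t" "t < 1" using frac_mult_phi_pos frac_lt_1 assms unfolding t_def by auto
  have "of_int (a n) = of_int n * phi - t" unfolding t_def a_def frac_def by simp
  then have "of_int (a n + n) * phi = of_int (2 * a n + n) + t * (2 - phi)"
    using phi_squared unfolding of_int_add of_int_mult of_int_numeral by algebra
  moreover have "0 < t * (2 - phi)" using t phi_less_two by simp
  moreover have "t * (2 - phi) < 1"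
    using mult_strict_mono[of t 1 "2 - phi" 1] t one_less_phi phi_less_two by simp
  ultimately show ?thesis unfolding a_def[of "a n + n"] floor_eq_iff by simp
qed

lemma f_of_a: assumes "n \<ge> 1" shows "f i j (a n) = f (i + 1) (j + int (fib (i + 1))) n"
  unfolding f_def a_of_a[OF assms] by (simp add: algebra_simps)

lemma f_of_a_add_self: assumes "n \<ge> 1" shows "f i j (a n + n) = f (i + 2) j n"
  unfolding f_def a_of_a_add_self[OF assms] by (simp add: numeral_2_eq_2 algebra_simps)

lemma strict_mono_f: "strict_mono (f i j)"
proof (rule strict_monoI)
  fix n m :: int assume "n < m"
  have "int (fib (i + 1)) * a n < int (fib (i + 1)) * a m"
    using strict_mono_a \<open>n < m\<close> by (simp add: strict_mono_less fib_neq_0_nat)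
  moreover have "int (fib i) * n \<le> int (fib i) * m" using \<open>n < m\<close> by (simp add: mult_left_mono)
  ultimately show "f i j n < f i j m" unfolding f_def by simp
qed

lemma image_f_of_a: "f i j ` a ` Npos = R (i + 1) (j + int (fib (i + 1)))"
  unfolding R_def image_image by (rule image_cong) (simp_all add: Npos_def f_of_a)

lemma image_f_of_a_add_self: "f i j ` (\<lambda>n. a n + n) ` Npos = R (i + 2) j"
  unfolding R_def image_image by (rule image_cong) (simp_all add: Npos_def f_of_a_add_self)

lemma R_eq_Un: "R i j = R (i + 1) (j + int (fib (i + 1))) \<union> R (i + 2) j"
  unfolding image_f_of_a[symmetric] image_f_of_a_add_self[symmetric] image_Un[symmetric]
    Beatty_Un_eq_Npos
  by (simp add: R_def)

lemma R_disjoint: "R (i + 1) (j + int (fib (i + 1))) \<inter> R (i + 2) j = {}"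
  unfolding image_f_of_a[symmetric] image_f_of_a_add_self[symmetric]
    image_Int[OF strict_mono_on_imp_inj_on[OF strict_mono_f], symmetric] Beatty_Int_eq_empty
  by simp

lemma R_nonempty: "R i j \<noteq> {}"
  unfolding R_def Npos_def by auto

lemma R_0_0: "R 0 0 = a ` Npos" and R_1_0: "R 1 0 = (\<lambda>n. a n + n) ` Npos"
  unfolding R_def f_def by simp_all

lemma disjoint_family_on_refinement:
  assumes "disjoint_family_on A I" and "disjoint_family_on K I"
    and "\<And>i. i \<in> I \<Longrightarrow> disjoint_family_on A (K i)"
    and "\<And>i. i \<in> I \<Longrightarrow> A i = (\<Union>k\<in>K i. A k)"
  shows "disjoint_family_on A (\<Union>i\<in>I. K i)"
  unfolding disjoint_family_on_def
proof (intro ballI impI)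
  fix k l assume "k \<in> (\<Union>i\<in>I. K i)" "l \<in> (\<Union>i\<in>I. K i)" "k \<noteq> l"
  then obtain i i' where "i \<in> I" "k \<in> K i" "i' \<in> I" "l \<in> K i'" by blast
  show "A k \<inter> A l = {}"
  proof (cases "i = i'")
    case True
    with \<open>l \<in> K i'\<close> have "l \<in> K i" by simp
    then show ?thesis
      using disjoint_family_onD[OF assms(3)[OF \<open>i \<in> I\<close>] \<open>k \<in> K i\<close>] \<open>k \<noteq> l\<close> by blast
  next
    case False
    have "A i \<inter> A i' = {}"
      using disjoint_family_onD[OF assms(1) \<open>i \<in> I\<close> \<open>i' \<in> I\<close> False] .
    moreover have "A k \<subseteq> A i" "A l \<subseteq> A i'"
      using assms(4) \<open>i \<in> I\<close> \<open>k \<in> K i\<close> \<open>i' \<in> I\<close> \<open>l \<in> K i'\<close> by blast+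
    ultimately show ?thesis by blast
  qed
qed

definition level :: "nat \<Rightarrow> (nat \<times> int) set" where
  "level i = {i} \<times> {0..<int (fib (i + 2))} \<union> {i + 1} \<times> {0..<int (fib (i + 1))}"

lemma Idx_eq_level: "Idx (i + 3) = level i"
  unfolding Idx_def level_def by auto

lemma mem_level:
  "(x, j) \<in> level i \<longleftrightarrow>
    x = i \<and> 0 \<le> j \<and> j < int (fib (i + 2)) \<or> x = i + 1 \<and> 0 \<le> j \<and> j < int (fib (i + 1))"
  unfolding level_def by auto

lemma level_0: "level 0 = {(0, 0), (1, 0)}"
  unfolding level_def by (auto simp: numeral_2_eq_2)

definition children :: "nat \<Rightarrow> nat \<times> int \<Rightarrow> (nat \<times> int) set" where
  "children i p =
    (if fst p = i then {(i + 1, snd p + int (fib (i + 1))), (i + 2, snd p)} else {p})"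

lemma level_Suc: "level (Suc i) = (\<Union>p\<in>level i. children i p)"
proof (intro equalityI subsetI)
  fix q assume "q \<in> level (Suc i)"
  obtain x j where q: "q = (x, j)" by fastforce
  have "x = i + 1 \<and> 0 \<le> j \<and> j < int (fib (i + 1)) + int (fib (i + 2))
      \<or> x = i + 2 \<and> 0 \<le> j \<and> j < int (fib (i + 2))"
    using \<open>q \<in> level (Suc i)\<close> unfolding q mem_level by (simp add: numeral_2_eq_2)
  then consider
      "x = i + 1" "0 \<le> j" "j < int (fib (i + 1))"
    | "x = i + 1" "int (fib (i + 1)) \<le> j" "j < int (fib (i + 1)) + int (fib (i + 2))"
    | "x = i + 2" "0 \<le> j" "j < int (fib (i + 2))"
    using le_less_linear[of "int (fib (i + 1))" j] by blast
  then show "q \<in> (\<Union>p\<in>level i. children i p)"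
  proof cases
    case 1
    then have "q \<in> level i" "q \<in> children i q" by (simp_all add: q mem_level children_def)
    then show ?thesis by blast
  next
    case 2
    then have "(i, j - int (fib (i + 1))) \<in> level i" "q \<in> children i (i, j - int (fib (i + 1)))"
      by (simp_all add: q mem_level children_def)
    then show ?thesis by blast
  next
    case 3
    then have "(i, j) \<in> level i" "q \<in> children i (i, j)" by (simp_all add: q mem_level children_def)
    then show ?thesis by blast
  qed
next
  fix q assume "q \<in> (\<Union>p\<in>level i. children i p)"
  then obtain x j where "(x, j) \<in> level i" "q \<in> children i (x, j)" by auto
  then show "q \<in> level (Suc i)"
    by (cases q) (auto simp: mem_level children_def numeral_2_eq_2 split: if_splits)
qed

lemma disjoint_family_on_children: "disjoint_family_on (children i) (level i)"
  unfolding disjoint_family_on_def level_def children_def by auto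

lemma R_eq_UN_children: "case_prod R p = (\<Union>q\<in>children i p. case_prod R q)"
  using R_eq_Un[of i "snd p"] by (auto simp: children_def split_beta)

lemma disjoint_family_on_R_children: "disjoint_family_on (case_prod R) (children i p)"
  using R_disjoint[of i "snd p"] by (auto simp: children_def disjoint_family_on_def)

lemma disjoint_family_on_level: "disjoint_family_on (case_prod R) (level i)"
proof (induction i)
  case 0
  show ?case
    unfolding level_0 disjoint_family_on_def using Beatty_Int_eq_empty R_0_0 R_1_0
    by (simp add: Int_commute)
next
  case (Suc i)
  show ?case
    unfolding level_Suc using Suc.IH disjoint_family_on_children disjoint_family_on_R_children
    by (intro disjoint_family_on_refinement) (simp_all flip: R_eq_UN_children)
qed

lemma UN_level: "(\<Union>p\<in>level i. case_prod R p) = Npos"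
proof (induction i)
  case 0
  show ?case unfolding level_0 using Beatty_Un_eq_Npos R_0_0 R_1_0 by simp
next
  case (Suc i)
  show ?case unfolding level_Suc UN_UN_flatten by (simp flip: R_eq_UN_children add: Suc.IH)
qed

lemma card_level: "card (level i) = fib (i + 3)"
proof -
  have "card (level i) = card ({i} \<times> {0..<int (fib (i + 2))}) + card ({i + 1} \<times> {0..<int (fib (i + 1))})"
    unfolding level_def by (rule card_Un_disjoint) auto
  also have "\<dots> = fib (i + 2) + fib (i + 1)" by (simp add: card_cartesian_product_singleton)
  also have "\<dots> = fib (i + 3)" by (simp add: numeral_3_eq_3 numeral_2_eq_2)
  finally show ?thesis .
qed

lemma PP_eq_image_level: "k \<ge> 3 \<Longrightarrow> PP k = case_prod R ` level (k - 3)"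
  using Idx_eq_level[of "k - 3"] by (simp add: PP_def)

lemma partition_on_PP: "partition_on Npos (PP k)"
proof (cases "k \<ge> 3")
  case True
  have "disjoint (case_prod R ` level (k - 3))"
    using disjoint_family_on_level by (rule disjoint_family_on_disjoint_image)
  moreover have "\<Union> (case_prod R ` level (k - 3)) = Npos" using UN_level by simp
  moreover have "{} \<notin> case_prod R ` level (k - 3)" by (auto simp: R_nonempty[symmetric])
  ultimately show ?thesis unfolding PP_eq_image_level[OF True] partition_on_def by blast
next
  case False
  have "1 \<in> Npos" by (simp add: Npos_def)
  then show ?thesis unfolding PP_def using False by (auto intro: partition_on_space)
qed

lemma card_PP: "k \<ge> 1 \<Longrightarrow> card (PP k) = fib k"
proof (cases "k \<ge> 3")
  case True
  have "inj_on (case_prod R) (level (k - 3))"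
    using disjoint_family_on_level
    by (subst (asm) disjoint_family_on_iff_disjoint_image) (auto simp: R_nonempty split_beta)
  then show ?thesis
    unfolding PP_eq_image_level[OF True] using card_level[of "k - 3"] True by (simp add: card_image)
next
  case False
  assume "k \<ge> 1"
  with False have "k = 1 \<or> k = 2" by auto
  then show ?thesis unfolding PP_def by (auto simp: numeral_2_eq_2)
qed

theorem theorem3p2:
  fixes k :: nat
  assumes "k \<ge> 1"
  shows "(\<forall>A \<in> PP k. \<forall>B \<in> PP k. A \<noteq> B \<longrightarrow> A \<inter> B = {})
       \<and> \<Union> (PP k) = Npos
       \<and> {} \<notin> PP k
       \<and> card (PP k) = fib k
       \<and> (k \<ge> 3 \<longrightarrow>
            (\<forall>p \<in> Idx k. \<forall>q \<in> Idx k. p \<noteq> q \<longrightarrow>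
               R (fst p) (snd p) \<inter> R (fst q) (snd q) = {})
          \<and> (\<Union>p \<in> Idx k. R (fst p) (snd p)) = Npos)"
proof -
  have R_pair: "case_prod R = (\<lambda>p. R (fst p) (snd p))" by (simp add: fun_eq_iff split_beta)
  have "disjoint_family_on (\<lambda>p. R (fst p) (snd p)) (Idx k)
      \<and> (\<Union>p \<in> Idx k. R (fst p) (snd p)) = Npos" if "k \<ge> 3"
    using disjoint_family_on_level[of "k - 3"] UN_level[of "k - 3"] Idx_eq_level[of "k - 3"] that
    by (simp add: R_pair)
  then show ?thesis
    using partition_on_PP[of k] card_PP[OF assms]
    unfolding partition_on_def disjoint_def disjoint_family_on_def by blast
qed

end
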